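(* Let $L$ and $M$ be linear partial differential operators in $\mathbb{R}^n$ with coefficients in $\mathbf{F}$ such that $\mathrm{ord}\, L \geq 1$, $\mathrm{ord}\, M = 1$, and $L$ is not right divisible by $M$. Suppose they satisfy two relations $M_1L = L_1M$ and $\widetilde{M}_1L = \widetilde{L}_1M$ with differential operators $M_1, L_1, \widetilde{M}_1, \widetilde{L}_1$, where $\mathrm{Sym}\, L = \mathrm{Sym}\, L_1 = \mathrm{Sym}\, \widetilde{L}_1$. Then $M_1 = \widetilde{M}_1$ and $L_1 = \widetilde{L}_1$.
   Context: $\mathbf{F}$ is a differential field of functions of $x_1,\ldots,x_n$; operators lie in $\mathbf{F}[D_{x_1},\ldots,D_{x_n}]$. $\mathrm{Sym}$ denotes the principal symbol. $L$ is right divisible by $M$ if $L=SM$ for some differential operator $S$. *)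

theory Defs
  imports Main
begin

text \<open>
  Differential field: a field 'a (characteristic 0, as any field of functions) with n
  commuting derivations delta 0, ..., delta (n-1), the partial derivatives in x_1..x_n.
  A differential operator sum_alpha a_alpha D^alpha is represented by its coefficient
  function P :: (nat => nat) => 'a on multi-indices alpha (alpha i = 0 for i >= n),
  with finite support.
\<close>

definition diff_field :: "nat \<Rightarrow> (nat \<Rightarrow> 'a::field \<Rightarrow> 'a) \<Rightarrow> bool" where
  "diff_field n \<delta> \<longleftrightarrow>
     (\<forall>i<n. \<forall>x y. \<delta> i (x + y) = \<delta> i x + \<delta> i y) \<and>
     (\<forall>i<n. \<forall>x y. \<delta> i (x * y) = x * \<delta> i y + \<delta> i x * y) \<and>
     (\<forall>i<n. \<forall>j<n. \<forall>x. \<delta> i (\<delta> j x) = \<delta> j (\<delta> i x))"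

definition is_op :: "nat \<Rightarrow> ((nat \<Rightarrow> nat) \<Rightarrow> 'a::zero) \<Rightarrow> bool" where
  "is_op n P \<longleftrightarrow> finite {\<alpha>. P \<alpha> \<noteq> 0} \<and> (\<forall>\<alpha>. P \<alpha> \<noteq> 0 \<longrightarrow> (\<forall>i\<ge>n. \<alpha> i = 0))"

definition opsupp :: "((nat \<Rightarrow> nat) \<Rightarrow> 'a::zero) \<Rightarrow> (nat \<Rightarrow> nat) set" where
  "opsupp P = {\<alpha>. P \<alpha> \<noteq> 0}"

definition mdeg :: "nat \<Rightarrow> (nat \<Rightarrow> nat) \<Rightarrow> nat" where
  "mdeg n \<alpha> = (\<Sum>i<n. \<alpha> i)"

definition below :: "nat \<Rightarrow> (nat \<Rightarrow> nat) \<Rightarrow> (nat \<Rightarrow> nat) set" where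
  "below n \<alpha> = {\<gamma>. (\<forall>i<n. \<gamma> i \<le> \<alpha> i) \<and> (\<forall>i\<ge>n. \<gamma> i = 0)}"

definition mchoose :: "nat \<Rightarrow> (nat \<Rightarrow> nat) \<Rightarrow> (nat \<Rightarrow> nat) \<Rightarrow> nat" where
  "mchoose n \<alpha> \<gamma> = (\<Prod>i<n. \<alpha> i choose \<gamma> i)"

fun dpow :: "nat \<Rightarrow> (nat \<Rightarrow> 'a \<Rightarrow> 'a) \<Rightarrow> (nat \<Rightarrow> nat) \<Rightarrow> 'a \<Rightarrow> 'a" where
  "dpow 0 \<delta> \<gamma> = id"
| "dpow (Suc k) \<delta> \<gamma> = dpow k \<delta> \<gamma> \<circ> (\<delta> k ^^ \<gamma> k)"

text \<open>Composition of operators via the Leibniz rule: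
  (a D^alpha)(b D^beta) = sum_{gamma \<le> alpha} C(alpha,gamma) a (d^gamma b) D^(alpha-gamma+beta).\<close>
definition opmul :: "nat \<Rightarrow> (nat \<Rightarrow> 'a::field \<Rightarrow> 'a) \<Rightarrow>
    ((nat \<Rightarrow> nat) \<Rightarrow> 'a) \<Rightarrow> ((nat \<Rightarrow> nat) \<Rightarrow> 'a) \<Rightarrow> ((nat \<Rightarrow> nat) \<Rightarrow> 'a)" where
  "opmul n \<delta> P Q = (\<lambda>\<mu>. \<Sum>\<alpha>\<in>opsupp P. \<Sum>\<beta>\<in>opsupp Q. \<Sum>\<gamma>\<in>below n \<alpha>.
      if (\<lambda>i. \<alpha> i - \<gamma> i + \<beta> i) = \<mu>
      then P \<alpha> * of_nat (mchoose n \<alpha> \<gamma>) * dpow n \<delta> \<gamma> (Q \<beta>) else 0)"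

text \<open>Order (the zero operator gets order 0).\<close>
definition ord :: "nat \<Rightarrow> ((nat \<Rightarrow> nat) \<Rightarrow> 'a::zero) \<Rightarrow> nat" where
  "ord n P = (if opsupp P = {} then 0 else Max (mdeg n ` opsupp P))"

definition Sym :: "nat \<Rightarrow> ((nat \<Rightarrow> nat) \<Rightarrow> 'a::zero) \<Rightarrow> ((nat \<Rightarrow> nat) \<Rightarrow> 'a)" where
  "Sym n P = (\<lambda>\<alpha>. if mdeg n \<alpha> = ord n P then P \<alpha> else 0)"

definition right_divisible :: "nat \<Rightarrow> (nat \<Rightarrow> 'a::field \<Rightarrow> 'a) \<Rightarrow>
    ((nat \<Rightarrow> nat) \<Rightarrow> 'a) \<Rightarrow> ((nat \<Rightarrow> nat) \<Rightarrow> 'a) \<Rightarrow> bool" where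
  "right_divisible n \<delta> L M \<longleftrightarrow> (\<exists>S. is_op n S \<and> L = opmul n \<delta> S M)"

end

theory Submission
  imports Defs "HOL-Library.FuncSet" "HOL-Library.Fun_Lexorder"
begin

text \<open>
  Subtracting the two relations gives \<open>(M\<^sub>1 - M\<^sub>1') L = (L\<^sub>1 - L\<^sub>1') M\<close>, where
  \<open>L\<^sub>1 - L\<^sub>1'\<close> has order below \<open>ord L\<close> because the principal symbols agree. Orders add
  under composition: the coefficient of a product at the sum of the lexicographically greatest
  top-degree multi-indices of the factors is the product of their coefficients, no derivative
  of a coefficient contributing. Hence a nonzero \<open>M\<^sub>1 - M\<^sub>1'\<close> has order 0, i.e. is a
  nonzero function, and dividing by it exhibits \<open>L\<close> as a left multiple of \<open>M\<close>. So
  \<open>M\<^sub>1 = M\<^sub>1'\<close>, and then \<open>(L\<^sub>1 - L\<^sub>1') M = 0\<close> with \<open>M \<noteq> 0\<close> forces \<open>L\<^sub>1 = L\<^sub>1'\<close>.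
\<close>

lemma less_fun_total:
  fixes f g :: "'a::wellorder \<Rightarrow> 'b::linorder"
  assumes "f \<noteq> g"
  shows "less_fun f g \<or> less_fun g f"
proof -
  define k where "k = (LEAST k. f k \<noteq> g k)"
  have "\<exists>k. f k \<noteq> g k"
    using assms by (auto simp: fun_eq_iff)
  then have "f k \<noteq> g k"
    unfolding k_def by (rule LeastI_ex)
  moreover have "\<forall>k'<k. f k' = g k'"
    unfolding k_def using not_less_Least by blast
  ultimately show ?thesis
    unfolding less_fun_def by (auto simp: neq_iff)
qed

lemma finite_has_less_fun_maximal:
  fixes A :: "('a::linorder \<Rightarrow> 'b::linorder) set"
  assumes "finite A" "A \<noteq> {}"
  shows "\<exists>m\<in>A. \<forall>x\<in>A. \<not> less_fun m x"
proof -
  obtain m where "m \<in> A" "\<forall>x\<in>A. less_fun m x \<or> m = x \<longrightarrow> m = x"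
    using order.finite_has_maximal[OF order_less_fun assms] by blast
  then show ?thesis
    using less_fun_irrefl by blast
qed

lemma finite_below: "finite (below n \<alpha>)"
proof -
  have "(\<lambda>\<gamma>. restrict \<gamma> {..<n}) ` below n \<alpha> \<subseteq> PiE {..<n} (\<lambda>i. {..\<alpha> i})"
    by (auto simp: below_def PiE_def extensional_def)
  moreover have "inj_on (\<lambda>\<gamma>. restrict \<gamma> {..<n}) (below n \<alpha>)"
  proof (rule inj_onI, rule ext)
    fix \<gamma> \<gamma>' i
    assume "\<gamma> \<in> below n \<alpha>" "\<gamma>' \<in> below n \<alpha>" "restrict \<gamma> {..<n} = restrict \<gamma>' {..<n}"
    then show "\<gamma> i = \<gamma>' i"
      by (cases "i < n") (metis lessThan_iff restrict_apply', auto simp: below_def)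
  qed
  ultimately show ?thesis
    by (meson finite_PiE finite_atMost finite_lessThan finite_imageD finite_subset)
qed

lemma zero_in_below: "(\<lambda>_. 0) \<in> below n \<alpha>"
  by (simp add: below_def)

lemma below_zero: "below n (\<lambda>_. 0) = {\<lambda>_. 0}"
  by (auto simp: below_def fun_eq_iff) (meson not_less)

lemma mdeg_add: "mdeg n (\<lambda>i. \<alpha> i + \<beta> i) = mdeg n \<alpha> + mdeg n \<beta>"
  by (simp add: mdeg_def sum.distrib)

lemma mdeg_eq_0_imp_zero:
  assumes "\<forall>i\<ge>n. \<alpha> i = 0" "mdeg n \<alpha> = 0"
  shows "\<alpha> = (\<lambda>_. 0)"
  using assms by (auto simp: mdeg_def fun_eq_iff) (meson lessThan_iff not_le)

lemma
  assumes "\<gamma> \<in> below n \<alpha>"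
  shows mdeg_below_le: "mdeg n \<gamma> \<le> mdeg n \<alpha>"
    and mdeg_shift: "mdeg n (\<lambda>i. \<alpha> i - \<gamma> i + \<beta> i) = mdeg n \<alpha> - mdeg n \<gamma> + mdeg n \<beta>"
proof -
  have "mdeg n \<alpha> = mdeg n (\<lambda>i. \<alpha> i - \<gamma> i) + mdeg n \<gamma>"
    using assms unfolding mdeg_def below_def by (simp add: sum.distrib[symmetric])
  then show "mdeg n \<gamma> \<le> mdeg n \<alpha>"
    and "mdeg n (\<lambda>i. \<alpha> i - \<gamma> i + \<beta> i) = mdeg n \<alpha> - mdeg n \<gamma> + mdeg n \<beta>"
    using mdeg_add[of n "\<lambda>i. \<alpha> i - \<gamma> i" \<beta>] by simp_all
qed

lemma dpow_zero: "dpow k \<delta> (\<lambda>_. 0) = id"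
  by (induction k) auto

lemma mchoose_zero: "mchoose n \<alpha> (\<lambda>_. 0) = 1"
  by (simp add: mchoose_def)

definition Dmul_coeff ::
    "nat \<Rightarrow> (nat \<Rightarrow> 'a::field \<Rightarrow> 'a) \<Rightarrow> (nat \<Rightarrow> nat) \<Rightarrow> ((nat \<Rightarrow> nat) \<Rightarrow> 'a) \<Rightarrow> (nat \<Rightarrow> nat) \<Rightarrow> 'a" where
  "Dmul_coeff n \<delta> \<alpha> Q \<mu> = (\<Sum>\<beta>\<in>opsupp Q. \<Sum>\<gamma>\<in>below n \<alpha>.
      if (\<lambda>i. \<alpha> i - \<gamma> i + \<beta> i) = \<mu> then of_nat (mchoose n \<alpha> \<gamma>) * dpow n \<delta> \<gamma> (Q \<beta>) else 0)"

lemma opmul_eq_sum_Dmul_coeff: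
  assumes "finite A" "opsupp P \<subseteq> A"
  shows "opmul n \<delta> P Q \<mu> = (\<Sum>\<alpha>\<in>A. P \<alpha> * Dmul_coeff n \<delta> \<alpha> Q \<mu>)"
proof -
  have "opmul n \<delta> P Q \<mu> = (\<Sum>\<alpha>\<in>opsupp P. P \<alpha> * Dmul_coeff n \<delta> \<alpha> Q \<mu>)"
    unfolding opmul_def Dmul_coeff_def sum_distrib_left
    by (intro sum.cong refl) (simp add: mult.assoc)
  also have "\<dots> = (\<Sum>\<alpha>\<in>A. P \<alpha> * Dmul_coeff n \<delta> \<alpha> Q \<mu>)"
    by (rule sum.mono_neutral_left) (use assms in \<open>auto simp: opsupp_def\<close>)
  finally show ?thesis .
qed

lemma Dmul_coeff_zero:
  assumes "finite (opsupp Q)"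
  shows "Dmul_coeff n \<delta> (\<lambda>_. 0) Q \<mu> = Q \<mu>"
  using assms unfolding Dmul_coeff_def below_zero by (simp add: dpow_zero mchoose_zero opsupp_def)

lemma opmul_diff_left:
  assumes "finite (opsupp P)" "finite (opsupp P')"
  shows "opmul n \<delta> (\<lambda>\<alpha>. P \<alpha> - P' \<alpha>) Q \<mu> = opmul n \<delta> P Q \<mu> - opmul n \<delta> P' Q \<mu>"
proof -
  let ?A = "opsupp P \<union> opsupp P'"
  have "opsupp (\<lambda>\<alpha>. P \<alpha> - P' \<alpha>) \<subseteq> ?A"
    by (auto simp: opsupp_def)
  then show ?thesis
    using assms by (simp add: opmul_eq_sum_Dmul_coeff[of ?A] left_diff_distrib sum_subtractf)
qed

lemma opmul_scale_left:
  assumes "finite (opsupp P)"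
  shows "opmul n \<delta> (\<lambda>\<alpha>. c * P \<alpha>) Q \<mu> = c * opmul n \<delta> P Q \<mu>"
proof -
  have "opsupp (\<lambda>\<alpha>. c * P \<alpha>) \<subseteq> opsupp P"
    by (auto simp: opsupp_def)
  then show ?thesis
    using assms by (simp add: opmul_eq_sum_Dmul_coeff[of "opsupp P"] sum_distrib_left mult.assoc)
qed

lemma opmul_const_left:
  assumes "opsupp F \<subseteq> {\<lambda>_. 0}" "finite (opsupp Q)"
  shows "opmul n \<delta> F Q \<mu> = F (\<lambda>_. 0) * Q \<mu>"
  using assms by (simp add: opmul_eq_sum_Dmul_coeff[of "{\<lambda>_. 0}"] Dmul_coeff_zero)

lemma opmul_zero_left: "opmul n \<delta> (\<lambda>_. 0) Q = (\<lambda>_. 0)"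
  by (simp add: opmul_def opsupp_def)

lemma is_op_finite: "is_op n P \<Longrightarrow> finite (opsupp P)"
  by (simp add: is_op_def opsupp_def)

lemma is_op_diff:
  fixes P Q :: "(nat \<Rightarrow> nat) \<Rightarrow> 'a::ab_group_add"
  assumes "is_op n P" "is_op n Q"
  shows "is_op n (\<lambda>\<alpha>. P \<alpha> - Q \<alpha>)"
proof -
  have "{\<alpha>. P \<alpha> - Q \<alpha> \<noteq> 0} \<subseteq> {\<alpha>. P \<alpha> \<noteq> 0} \<union> {\<alpha>. Q \<alpha> \<noteq> 0}"
    by force
  then show ?thesis
    using assms unfolding is_op_def by (metis (lifting) diff_self finite_Un finite_subset)
qed

lemma is_op_scale:
  fixes P :: "(nat \<Rightarrow> nat) \<Rightarrow> 'a::field"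
  shows "is_op n P \<Longrightarrow> is_op n (\<lambda>\<alpha>. c * P \<alpha>)"
  by (simp add: is_op_def)

lemma mdeg_le_ord: "finite (opsupp P) \<Longrightarrow> \<alpha> \<in> opsupp P \<Longrightarrow> mdeg n \<alpha> \<le> ord n P"
  by (auto simp: ord_def)

lemma ord_attained:
  assumes "finite (opsupp P)" "opsupp P \<noteq> {}"
  obtains \<alpha> where "\<alpha> \<in> opsupp P" "mdeg n \<alpha> = ord n P"
proof -
  have "Max (mdeg n ` opsupp P) \<in> mdeg n ` opsupp P"
    using assms by (intro Max_in) auto
  then obtain \<alpha> where "\<alpha> \<in> opsupp P" "mdeg n \<alpha> = Max (mdeg n ` opsupp P)"
    by (metis imageE)
  then show ?thesis
    using assms(2) that unfolding ord_def by simp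
qed

lemma ord_0_imp_opsupp_zero:
  assumes "is_op n F" "ord n F = 0"
  shows "opsupp F \<subseteq> {\<lambda>_. 0}"
proof
  fix \<alpha> assume \<alpha>: "\<alpha> \<in> opsupp F"
  then have "mdeg n \<alpha> = 0"
    using mdeg_le_ord[OF is_op_finite[OF assms(1)] \<alpha>, of n] assms(2) by simp
  moreover have "\<forall>i\<ge>n. \<alpha> i = 0"
    using \<alpha> assms(1) by (simp add: is_op_def opsupp_def)
  ultimately show "\<alpha> \<in> {\<lambda>_. 0}"
    using mdeg_eq_0_imp_zero by blast
qed

lemma Sym_eq_imp_ord_eq:
  assumes "finite (opsupp P)" "finite (opsupp Q)" "Sym n P = Sym n Q"
  shows "ord n P = ord n Q"
proof -
  have ord_eq_if_nonzero: "ord n P = ord n Q"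
    if fin: "finite (opsupp P)" and ne: "opsupp P \<noteq> {}" and Sym: "Sym n P = Sym n Q"
    for P Q :: "(nat \<Rightarrow> nat) \<Rightarrow> 'a"
  proof -
    obtain \<alpha> where "\<alpha> \<in> opsupp P" "mdeg n \<alpha> = ord n P"
      using ord_attained[OF fin ne] by blast
    then have "Sym n Q \<alpha> \<noteq> 0"
      using Sym[symmetric] by (simp add: Sym_def opsupp_def)
    then show ?thesis
      using \<open>mdeg n \<alpha> = ord n P\<close> by (simp add: Sym_def split: if_splits)
  qed
  show ?thesis
  proof (cases "opsupp P = {} \<and> opsupp Q = {}")
    case True
    then show ?thesis by (simp add: ord_def)
  next
    case False
    then show ?thesis
      using ord_eq_if_nonzero[of P Q] ord_eq_if_nonzero[of Q P] assms by (metis (full_types))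
  qed
qed

lemma Sym_eq_imp_diff_lower_order:
  fixes P Q :: "(nat \<Rightarrow> nat) \<Rightarrow> 'a::ab_group_add"
  assumes "finite (opsupp P)" "finite (opsupp Q)" "Sym n P = Sym n Q"
    and "\<alpha> \<in> opsupp (\<lambda>\<alpha>. P \<alpha> - Q \<alpha>)"
  shows "mdeg n \<alpha> < ord n P"
proof -
  have ord: "ord n Q = ord n P"
    using Sym_eq_imp_ord_eq[OF assms(1-3)] by simp
  have "P \<alpha> \<noteq> Q \<alpha>"
    using assms(4) by (simp add: opsupp_def)
  then have "\<alpha> \<in> opsupp P \<or> \<alpha> \<in> opsupp Q"
    by (auto simp: opsupp_def)
  then have "mdeg n \<alpha> \<le> ord n P"
    using mdeg_le_ord assms(1,2) ord by metis
  moreover have "mdeg n \<alpha> \<noteq> ord n P"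
    using fun_cong[OF assms(3), of \<alpha>] \<open>P \<alpha> \<noteq> Q \<alpha>\<close> ord by (auto simp: Sym_def)
  ultimately show ?thesis by simp
qed

lemma opmul_nonzero_imp_decomp:
  assumes "opmul n \<delta> P Q \<mu> \<noteq> 0"
  obtains \<alpha> \<beta> \<gamma> where "\<alpha> \<in> opsupp P" "\<beta> \<in> opsupp Q" "\<gamma> \<in> below n \<alpha>"
    "(\<lambda>i. \<alpha> i - \<gamma> i + \<beta> i) = \<mu>"
proof (rule ccontr)
  assume "\<not> thesis"
  then have "opmul n \<delta> P Q \<mu> = 0"
    using that unfolding opmul_def by (auto intro!: sum.neutral) blast
  then show False
    using assms by contradiction
qed

lemma opmul_nonzero_imp_mdeg_le:
  assumes "\<forall>\<alpha>\<in>opsupp P. mdeg n \<alpha> \<le> p" "\<forall>\<beta>\<in>opsupp Q. mdeg n \<beta> \<le> q"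
    and "opmul n \<delta> P Q \<mu> \<noteq> 0"
  shows "mdeg n \<mu> \<le> p + q"
proof -
  obtain \<alpha> \<beta> \<gamma> where "\<alpha> \<in> opsupp P" "\<beta> \<in> opsupp Q" "\<gamma> \<in> below n \<alpha>"
    and \<mu>: "(\<lambda>i. \<alpha> i - \<gamma> i + \<beta> i) = \<mu>"
    using opmul_nonzero_imp_decomp[OF assms(3)] by blast
  then show ?thesis
    using assms(1,2) mdeg_shift[of \<gamma> n \<alpha> \<beta>] by fastforce
qed

definition leading_index :: "nat \<Rightarrow> ((nat \<Rightarrow> nat) \<Rightarrow> 'a::zero) \<Rightarrow> (nat \<Rightarrow> nat) \<Rightarrow> bool" where
  "leading_index n P \<alpha>\<^sub>0 \<longleftrightarrow> \<alpha>\<^sub>0 \<in> opsupp P \<and> mdeg n \<alpha>\<^sub>0 = ord n P \<and>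
     (\<forall>\<alpha>\<in>opsupp P. mdeg n \<alpha> = ord n P \<longrightarrow> \<not> less_fun \<alpha>\<^sub>0 \<alpha>)"

lemma leading_index_exists:
  assumes "finite (opsupp P)" "opsupp P \<noteq> {}"
  obtains \<alpha>\<^sub>0 where "leading_index n P \<alpha>\<^sub>0"
proof -
  let ?T = "{\<alpha>\<in>opsupp P. mdeg n \<alpha> = ord n P}"
  have "finite ?T" "?T \<noteq> {}"
    using assms ord_attained[OF assms, of n] by auto
  then obtain \<alpha>\<^sub>0 where "\<alpha>\<^sub>0 \<in> ?T" "\<forall>\<alpha>\<in>?T. \<not> less_fun \<alpha>\<^sub>0 \<alpha>"
    using finite_has_less_fun_maximal by blast
  then show ?thesis
    using that by (auto simp: leading_index_def)
qed

text \<open>The top-degree terms of a product arise only from the leading terms of the factors with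
  no derivative falling on a coefficient; among them, lexicographic maximality singles out one.\<close>
lemma leading_index_decomp_unique:
  assumes "finite (opsupp P)" "finite (opsupp Q)"
    and lead: "leading_index n P \<alpha>\<^sub>0" "leading_index n Q \<beta>\<^sub>0"
    and dec: "\<alpha> \<in> opsupp P" "\<beta> \<in> opsupp Q" "\<gamma> \<in> below n \<alpha>"
      "(\<lambda>i. \<alpha> i - \<gamma> i + \<beta> i) = (\<lambda>i. \<alpha>\<^sub>0 i + \<beta>\<^sub>0 i)"
  shows "\<alpha> = \<alpha>\<^sub>0 \<and> \<beta> = \<beta>\<^sub>0 \<and> \<gamma> = (\<lambda>_. 0)"
proof -
  have top: "mdeg n \<alpha>\<^sub>0 = ord n P" "mdeg n \<beta>\<^sub>0 = ord n Q"
    using lead by (simp_all add: leading_index_def)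
  have "mdeg n \<alpha> - mdeg n \<gamma> + mdeg n \<beta> = ord n P + ord n Q"
    using mdeg_shift[OF dec(3), of \<beta>] dec(4) top by (simp add: mdeg_add)
  moreover have "mdeg n \<gamma> \<le> mdeg n \<alpha>" "mdeg n \<alpha> \<le> ord n P" "mdeg n \<beta> \<le> ord n Q"
    using mdeg_below_le[OF dec(3)] mdeg_le_ord assms(1,2) dec(1,2) by auto
  ultimately have "mdeg n \<gamma> = 0" and \<alpha>: "mdeg n \<alpha> = ord n P" and \<beta>: "mdeg n \<beta> = ord n Q"
    by linarith+
  then have \<gamma>: "\<gamma> = (\<lambda>_. 0)"
    using dec(3) mdeg_eq_0_imp_zero by (auto simp: below_def)
  then have sum: "\<alpha> i + \<beta> i = \<alpha>\<^sub>0 i + \<beta>\<^sub>0 i" for i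
    using fun_cong[OF dec(4), of i] by simp
  have "\<alpha> = \<alpha>\<^sub>0"
  proof (rule ccontr)
    assume "\<alpha> \<noteq> \<alpha>\<^sub>0"
    then have "less_fun \<alpha> \<alpha>\<^sub>0"
      using less_fun_total lead(1) dec(1) \<alpha> unfolding leading_index_def by blast
    then obtain k where k: "\<alpha> k < \<alpha>\<^sub>0 k" "\<forall>k'<k. \<alpha> k' = \<alpha>\<^sub>0 k'"
      by (auto elim: less_funE)
    have "\<beta>\<^sub>0 k < \<beta> k"
      using sum[of k] k(1) by linarith
    moreover have "\<forall>k'<k. \<beta>\<^sub>0 k' = \<beta> k'"
      using sum k(2) by (metis add_left_cancel)
    ultimately have "less_fun \<beta>\<^sub>0 \<beta>"
      by (blast intro: less_funI)
    then show False
      using lead(2) dec(2) \<beta> unfolding leading_index_def by blast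
  qed
  then show ?thesis
    using \<gamma> sum by (simp add: fun_eq_iff)
qed

lemma opmul_at_leading_indices:
  assumes "finite (opsupp P)" "finite (opsupp Q)"
    and lead: "leading_index n P \<alpha>\<^sub>0" "leading_index n Q \<beta>\<^sub>0"
  shows "opmul n \<delta> P Q (\<lambda>i. \<alpha>\<^sub>0 i + \<beta>\<^sub>0 i) = P \<alpha>\<^sub>0 * Q \<beta>\<^sub>0"
proof -
  let ?z = "\<lambda>_::nat. 0::nat"
  have "opmul n \<delta> P Q (\<lambda>i. \<alpha>\<^sub>0 i + \<beta>\<^sub>0 i) = (\<Sum>\<alpha>\<in>opsupp P. \<Sum>\<beta>\<in>opsupp Q. \<Sum>\<gamma>\<in>below n \<alpha>.
      if \<gamma> = ?z then if \<beta> = \<beta>\<^sub>0 then if \<alpha> = \<alpha>\<^sub>0 then P \<alpha>\<^sub>0 * Q \<beta>\<^sub>0 else 0 else 0 else 0)"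
    unfolding opmul_def
  proof (intro sum.cong refl)
    fix \<alpha> \<beta> \<gamma>
    assume dec: "\<alpha> \<in> opsupp P" "\<beta> \<in> opsupp Q" "\<gamma> \<in> below n \<alpha>"
    show "(if (\<lambda>i. \<alpha> i - \<gamma> i + \<beta> i) = (\<lambda>i. \<alpha>\<^sub>0 i + \<beta>\<^sub>0 i)
          then P \<alpha> * of_nat (mchoose n \<alpha> \<gamma>) * dpow n \<delta> \<gamma> (Q \<beta>) else 0) =
        (if \<gamma> = ?z then if \<beta> = \<beta>\<^sub>0 then if \<alpha> = \<alpha>\<^sub>0 then P \<alpha>\<^sub>0 * Q \<beta>\<^sub>0 else 0 else 0 else 0)"
    proof (cases "(\<lambda>i. \<alpha> i - \<gamma> i + \<beta> i) = (\<lambda>i. \<alpha>\<^sub>0 i + \<beta>\<^sub>0 i)")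
      case True
      then show ?thesis
        using leading_index_decomp_unique[OF assms dec] by (simp add: dpow_zero mchoose_zero)
    next
      case False
      then have "\<not> (\<alpha> = \<alpha>\<^sub>0 \<and> \<beta> = \<beta>\<^sub>0 \<and> \<gamma> = ?z)"
        by auto
      with False show ?thesis
        by auto
    qed
  qed
  also have "\<dots> = P \<alpha>\<^sub>0 * Q \<beta>\<^sub>0"
    using assms lead by (simp add: leading_index_def finite_below zero_in_below)
  finally show ?thesis .
qed

lemma opmul_nonzero_at_top_degree:
  assumes "finite (opsupp P)" "finite (opsupp Q)" "opsupp P \<noteq> {}" "opsupp Q \<noteq> {}"
  obtains \<mu> where "opmul n \<delta> P Q \<mu> \<noteq> 0" "mdeg n \<mu> = ord n P + ord n Q"
proof -
  obtain \<alpha>\<^sub>0 \<beta>\<^sub>0 where lead: "leading_index n P \<alpha>\<^sub>0" "leading_index n Q \<beta>\<^sub>0"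
    using leading_index_exists assms by metis
  then have "opmul n \<delta> P Q (\<lambda>i. \<alpha>\<^sub>0 i + \<beta>\<^sub>0 i) \<noteq> 0"
    using opmul_at_leading_indices[OF assms(1,2) lead] by (simp add: leading_index_def opsupp_def)
  moreover have "mdeg n (\<lambda>i. \<alpha>\<^sub>0 i + \<beta>\<^sub>0 i) = ord n P + ord n Q"
    using lead by (simp add: leading_index_def mdeg_add)
  ultimately show ?thesis
    using that by blast
qed

lemma opmul_eq_zero_imp:
  assumes "finite (opsupp P)" "finite (opsupp Q)" "opmul n \<delta> P Q = (\<lambda>_. 0)"
  shows "opsupp P = {} \<or> opsupp Q = {}"
  using opmul_nonzero_at_top_degree[OF assms(1,2)] assms(3) by metis

lemma ord_sum_le_if_opmul_eq:
  assumes "finite (opsupp F)" "finite (opsupp L)" "opsupp F \<noteq> {}" "opsupp L \<noteq> {}"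
    and "opmul n \<delta> F L = opmul n \<delta> E M"
    and "\<forall>\<alpha>\<in>opsupp E. mdeg n \<alpha> \<le> p" "\<forall>\<beta>\<in>opsupp M. mdeg n \<beta> \<le> q"
  shows "ord n F + ord n L \<le> p + q"
proof -
  obtain \<mu> where "opmul n \<delta> F L \<mu> \<noteq> 0" "mdeg n \<mu> = ord n F + ord n L"
    using opmul_nonzero_at_top_degree[OF assms(1-4)] by blast
  then show ?thesis
    using opmul_nonzero_imp_mdeg_le[OF assms(6,7)] assms(5) by metis
qed

lemma right_divisible_if_const_multiple:
  assumes "is_op n E" "finite (opsupp L)"
    and "opsupp F \<subseteq> {\<lambda>_. 0}" "F (\<lambda>_. 0) \<noteq> 0"
    and "opmul n \<delta> F L = opmul n \<delta> E M"
  shows "right_divisible n \<delta> L M"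
proof -
  let ?c = "F (\<lambda>_. 0)"
  have "L = opmul n \<delta> (\<lambda>\<alpha>. inverse ?c * E \<alpha>) M"
  proof
    fix \<mu>
    have "opmul n \<delta> (\<lambda>\<alpha>. inverse ?c * E \<alpha>) M \<mu> = inverse ?c * opmul n \<delta> E M \<mu>"
      using opmul_scale_left[OF is_op_finite[OF assms(1)]] .
    also have "\<dots> = inverse ?c * (?c * L \<mu>)"
      using opmul_const_left[OF assms(3,2)] assms(5) by metis
    also have "\<dots> = L \<mu>"
      using assms(4) by (simp add: mult.assoc[symmetric])
    finally show "L \<mu> = opmul n \<delta> (\<lambda>\<alpha>. inverse ?c * E \<alpha>) M \<mu>" ..
  qed
  then show ?thesis
    using is_op_scale[OF assms(1)] unfolding right_divisible_def by blast
qed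

lemma left_cofactor_eq_zero:
  assumes "is_op n F" "is_op n E" "finite (opsupp L)" "ord n L \<ge> 1"
    and "\<forall>\<alpha>\<in>opsupp E. mdeg n \<alpha> < ord n L" "\<forall>\<beta>\<in>opsupp M. mdeg n \<beta> \<le> 1"
    and FE: "opmul n \<delta> F L = opmul n \<delta> E M"
    and "\<not> right_divisible n \<delta> L M"
  shows "F = (\<lambda>_. 0)"
proof (rule ccontr)
  assume "F \<noteq> (\<lambda>_. 0)"
  then have F_nonzero: "opsupp F \<noteq> {}"
    by (auto simp: opsupp_def)
  have "opsupp L \<noteq> {}"
    using assms(4) by (auto simp: ord_def)
  moreover have "\<forall>\<alpha>\<in>opsupp E. mdeg n \<alpha> \<le> ord n L - 1"
    using assms(5) by fastforce
  ultimately have "ord n F + ord n L \<le> (ord n L - 1) + 1"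
    using ord_sum_le_if_opmul_eq[OF is_op_finite[OF assms(1)] assms(3) F_nonzero _ FE _ assms(6)]
    by blast
  then have F_const: "opsupp F \<subseteq> {\<lambda>_. 0}"
    using assms(4) ord_0_imp_opsupp_zero[OF assms(1)] by simp
  then have "F (\<lambda>_. 0) \<noteq> 0"
    using F_nonzero by (auto simp: opsupp_def)
  then show False
    using right_divisible_if_const_multiple[OF assms(2,3) F_const _ FE] assms(8) by blast
qed

theorem proposition4:
  fixes n :: nat and \<delta> :: "nat \<Rightarrow> 'a::field_char_0 \<Rightarrow> 'a"
    and L M M1 L1 M1' L1' :: "(nat \<Rightarrow> nat) \<Rightarrow> 'a"
  assumes "diff_field n \<delta>"
    and "is_op n L" "is_op n M" "is_op n M1" "is_op n L1" "is_op n M1'" "is_op n L1'"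
    and "ord n L \<ge> 1" "ord n M = 1"
    and "\<not> right_divisible n \<delta> L M"
    and "opmul n \<delta> M1 L = opmul n \<delta> L1 M"
    and "opmul n \<delta> M1' L = opmul n \<delta> L1' M"
    and "Sym n L = Sym n L1" "Sym n L = Sym n L1'"
  shows "M1 = M1' \<and> L1 = L1'"
proof -
  have fin: "finite (opsupp L)" "finite (opsupp M)" "finite (opsupp M1)"
    "finite (opsupp L1)" "finite (opsupp M1')" "finite (opsupp L1')"
    using assms(2-7) by (simp_all add: is_op_finite)
  define E where "E = (\<lambda>\<alpha>. L1 \<alpha> - L1' \<alpha>)"
  define F where "F = (\<lambda>\<alpha>. M1 \<alpha> - M1' \<alpha>)"
  have E: "is_op n E" and F: "is_op n F"
    unfolding E_def F_def using assms(4-7) by (simp_all add: is_op_diff)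
  have FE: "opmul n \<delta> F L = opmul n \<delta> E M"
    using assms(11,12) fin unfolding E_def F_def by (simp add: opmul_diff_left fun_eq_iff)
  have "ord n L1 = ord n L" and Sym: "Sym n L1 = Sym n L1'"
    using Sym_eq_imp_ord_eq[OF fin(1,4) assms(13)] assms(13,14) by simp_all
  then have "\<forall>\<alpha>\<in>opsupp E. mdeg n \<alpha> < ord n L"
    using Sym_eq_imp_diff_lower_order[OF fin(4,6) Sym] unfolding E_def by auto
  moreover have "\<forall>\<beta>\<in>opsupp M. mdeg n \<beta> \<le> 1"
    using mdeg_le_ord[OF fin(2)] assms(9) by metis
  ultimately have "F = (\<lambda>_. 0)"
    using left_cofactor_eq_zero[OF F E fin(1) assms(8) _ _ FE assms(10)] by blast
  then have "opmul n \<delta> E M = (\<lambda>_. 0)"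
    using FE opmul_zero_left by metis
  moreover have "opsupp M \<noteq> {}"
    using assms(9) by (auto simp: ord_def)
  ultimately have "E = (\<lambda>_. 0)"
    using opmul_eq_zero_imp[OF E[THEN is_op_finite] fin(2)] by (auto simp: opsupp_def)
  with \<open>F = (\<lambda>_. 0)\<close> show ?thesis
    unfolding E_def F_def by (simp add: fun_eq_iff)
qed

end
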